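(* Let $G$ be a graph with $n\geq 1$ vertices and minimum degree $\delta$, and let $t\geq 1$ be an integer with $2\delta-n\geq t-2$. Then $G$ contains every 2-degenerate graph on $t$ vertices as a subgraph.
   Context: All graphs are finite and simple. A graph is 2-degenerate if every non-empty subgraph of it has a vertex of degree at most 2. *)

theory Defs
  imports Main
begin

definition fin_graph :: "'a set \<Rightarrow> ('a \<Rightarrow> 'a \<Rightarrow> bool) \<Rightarrow> bool" where
  "fin_graph V E \<longleftrightarrow> finite V \<and> (\<forall>x y. E x y \<longrightarrow> x \<in> V \<and> y \<in> V)
     \<and> (\<forall>x y. E x y \<longrightarrow> E y x) \<and> (\<forall>x. \<not> E x x)"

definition degree :: "'a set \<Rightarrow> ('a \<Rightarrow> 'a \<Rightarrow> bool) \<Rightarrow> 'a \<Rightarrow> nat" where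
  "degree V E v = card {u \<in> V. E v u}"

definition min_degree :: "'a set \<Rightarrow> ('a \<Rightarrow> 'a \<Rightarrow> bool) \<Rightarrow> nat" where
  "min_degree V E = Min (degree V E ` V)"

definition is_subgraph :: "'a set \<Rightarrow> ('a \<Rightarrow> 'a \<Rightarrow> bool) \<Rightarrow> 'a set \<Rightarrow> ('a \<Rightarrow> 'a \<Rightarrow> bool) \<Rightarrow> bool" where
  "is_subgraph V' E' V E \<longleftrightarrow> fin_graph V' E' \<and> V' \<subseteq> V \<and> (\<forall>x y. E' x y \<longrightarrow> E x y)"

definition two_degenerate :: "'a set \<Rightarrow> ('a \<Rightarrow> 'a \<Rightarrow> bool) \<Rightarrow> bool" where
  "two_degenerate V E \<longleftrightarrow>
     (\<forall>V' E'. is_subgraph V' E' V E \<and> V' \<noteq> {} \<longrightarrow> (\<exists>v\<in>V'. degree V' E' v \<le> 2))"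

definition contains_subgraph ::
  "'a set \<Rightarrow> ('a \<Rightarrow> 'a \<Rightarrow> bool) \<Rightarrow> 'b set \<Rightarrow> ('b \<Rightarrow> 'b \<Rightarrow> bool) \<Rightarrow> bool" where
  "contains_subgraph VG EG VH EH \<longleftrightarrow>
     (\<exists>f. inj_on f VH \<and> f ` VH \<subseteq> VG \<and>
          (\<forall>x\<in>VH. \<forall>y\<in>VH. EH x y \<longrightarrow> EG (f x) (f y)))"

end

theory Submission
  imports Defs
begin

text \<open>Embed the 2-degenerate graph H vertex by vertex, in reverse of a degeneracy ordering: each
new vertex has at most two already embedded neighbours, so it suffices that for any set S of fewer
than t vertices of G and any A \<subseteq> S with at most two elements there is a vertex outside S adjacent
to all of A. The common neighbourhood of A has at least t - |A| vertices: for |A| = 2 this is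
inclusion-exclusion, |N(a) \<inter> N(b)| \<ge> 2\<delta> - n \<ge> t - 2, and the hypothesis also forces \<delta> \<ge> t - 1 and
n \<ge> t. Since the common neighbourhood avoids A, it cannot fit into the remaining |S| - |A| < t - |A|
vertices of S.\<close>

definition common_neighbours :: "'a set \<Rightarrow> ('a \<Rightarrow> 'a \<Rightarrow> bool) \<Rightarrow> 'a set \<Rightarrow> 'a set" where
  "common_neighbours V E A = {u \<in> V. \<forall>a\<in>A. E a u}"

definition extension_property :: "'a set \<Rightarrow> ('a \<Rightarrow> 'a \<Rightarrow> bool) \<Rightarrow> nat \<Rightarrow> bool" where
  "extension_property V E k \<longleftrightarrow>
     (\<forall>S A. S \<subseteq> V \<longrightarrow> card S < k \<longrightarrow> A \<subseteq> S \<longrightarrow> card A \<le> 2 \<longrightarrow>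
        (\<exists>w\<in>V - S. \<forall>a\<in>A. E a w))"

definition delete_vertex :: "('a \<Rightarrow> 'a \<Rightarrow> bool) \<Rightarrow> 'a \<Rightarrow> 'a \<Rightarrow> 'a \<Rightarrow> bool" where
  "delete_vertex E v = (\<lambda>x y. E x y \<and> x \<noteq> v \<and> y \<noteq> v)"

lemma extension_propertyD:
  assumes "extension_property V E k" and "S \<subseteq> V" and "card S < k" and "A \<subseteq> S" and "card A \<le> 2"
  shows "\<exists>w\<in>V - S. \<forall>a\<in>A. E a w"
  using assms unfolding extension_property_def by blast

lemma degree_less_card:
  assumes "fin_graph V E" and "v \<in> V"
  shows "degree V E v < card V"
  unfolding degree_def
  using assms by (intro psubset_card_mono) (auto simp: fin_graph_def)

lemma min_degree_le_degree:
  assumes "fin_graph V E" and "v \<in> V"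
  shows "min_degree V E \<le> degree V E v"
  using assms unfolding min_degree_def fin_graph_def by (intro Min_le) auto

lemma degree_add_le_card_common_neighbours:
  assumes "fin_graph V E"
  shows "degree V E a + degree V E b \<le> card V + card (common_neighbours V E {a, b})"
proof -
  let ?N = "\<lambda>x. {u \<in> V. E x u}"
  have fin: "finite V" using assms by (simp add: fin_graph_def)
  have "card (?N a) + card (?N b) = card (?N a \<union> ?N b) + card (?N a \<inter> ?N b)"
    using fin by (intro card_Un_Int) auto
  moreover have "card (?N a \<union> ?N b) \<le> card V" using fin by (intro card_mono) auto
  moreover have "?N a \<inter> ?N b = common_neighbours V E {a, b}"
    by (auto simp: common_neighbours_def)
  ultimately show ?thesis unfolding degree_def by simp
qed

lemma card_le_2_cases:
  assumes "finite A" and "card A \<le> 2"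
  obtains "A = {}" | a where "A = {a}" | a b where "A = {a, b}" and "a \<noteq> b"
proof -
  have "card A = 0 \<or> card A = 1 \<or> card A = 2" using assms(2) by auto
  then show ?thesis using assms(1) that by (auto simp: card_1_singleton_iff card_2_iff)
qed

lemma card_common_neighbours_ge:
  assumes G: "fin_graph V E" and "V \<noteq> {}"
    and md: "int t - 2 \<le> 2 * int (min_degree V E) - int (card V)"
    and A: "A \<subseteq> V" "card A \<le> 2"
  shows "t \<le> card (common_neighbours V E A) + card A"
proof -
  let ?\<delta> = "min_degree V E"
  have fin: "finite V" using G by (simp add: fin_graph_def)
  obtain v where v: "v \<in> V" using \<open>V \<noteq> {}\<close> by blast
  have "?\<delta> \<le> degree V E v" using min_degree_le_degree[OF G v] .
  also have "\<dots> < card V" using degree_less_card[OF G v] .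
  finally have "?\<delta> < card V" .
  with md have t_le_\<delta>: "t \<le> ?\<delta> + 1" and t_le_n: "t \<le> card V" by linarith+
  from finite_subset[OF A(1) fin] A(2) show ?thesis
  proof (cases rule: card_le_2_cases)
    case 1
    then show ?thesis using t_le_n by (simp add: common_neighbours_def)
  next
    case (2 a)
    then have "?\<delta> \<le> card (common_neighbours V E A)"
      using min_degree_le_degree[OF G, of a] A(1) by (simp add: degree_def common_neighbours_def)
    then show ?thesis using t_le_\<delta> 2 by simp
  next
    case (3 a b)
    then have "?\<delta> \<le> degree V E a" "?\<delta> \<le> degree V E b"
      using min_degree_le_degree[OF G] A(1) by auto
    moreover have "degree V E a + degree V E b \<le> card V + card (common_neighbours V E A)"
      using degree_add_le_card_common_neighbours[OF G, of a b] 3(1) by simp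
    moreover have "card A = 2" using 3 by simp
    ultimately show ?thesis using md by linarith
  qed
qed

lemma ex_outside_subset:
  assumes "finite S" and "A \<subseteq> S" and "C \<inter> A = {}" and "card S < card C + card A"
  shows "\<exists>w\<in>C. w \<notin> S"
proof (rule ccontr)
  assume "\<not> ?thesis"
  then have "C \<subseteq> S - A" using assms(3) by auto
  then have "card C \<le> card (S - A)" using assms(1) by (intro card_mono) auto
  also have "\<dots> = card S - card A"
    using assms(1,2) by (simp add: card_Diff_subset finite_subset)
  finally show False using assms(4) card_mono[OF assms(1,2)] by linarith
qed

lemma min_degree_imp_extension_property:
  assumes G: "fin_graph V E" and "V \<noteq> {}"
    and md: "int t - 2 \<le> 2 * int (min_degree V E) - int (card V)"
  shows "extension_property V E t"
  unfolding extension_property_def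
proof (intro allI impI)
  fix S A assume S: "S \<subseteq> V" "card S < t" and A: "A \<subseteq> S" "card A \<le> 2"
  have "finite S" using G S(1) finite_subset by (auto simp: fin_graph_def)
  moreover have "common_neighbours V E A \<inter> A = {}"
    using G by (auto simp: common_neighbours_def fin_graph_def)
  moreover have "A \<subseteq> V" using A(1) S(1) by blast
  from card_common_neighbours_ge[OF G \<open>V \<noteq> {}\<close> md this A(2)]
  have "card S < card (common_neighbours V E A) + card A" using S(2) by linarith
  ultimately obtain w where "w \<in> common_neighbours V E A" and "w \<notin> S"
    using ex_outside_subset[OF _ A(1)] by blast
  then show "\<exists>w\<in>V - S. \<forall>a\<in>A. E a w" by (auto simp: common_neighbours_def)
qed

lemma two_degenerate_obtains_low_degree:
  assumes "fin_graph V E" and "two_degenerate V E" and "V \<noteq> {}"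
  obtains v where "v \<in> V" and "degree V E v \<le> 2"
  using assms unfolding two_degenerate_def is_subgraph_def by blast

lemma fin_graph_delete_vertex:
  assumes "fin_graph V E"
  shows "fin_graph (V - {v}) (delete_vertex E v)"
  using assms by (auto simp: fin_graph_def delete_vertex_def)

lemma two_degenerate_delete_vertex:
  assumes "two_degenerate V E"
  shows "two_degenerate (V - {v}) (delete_vertex E v)"
  using assms unfolding two_degenerate_def is_subgraph_def delete_vertex_def by blast

lemma contains_subgraph_insert_vertex:
  assumes G: "fin_graph VG EG" and H: "fin_graph VH EH" and "v \<in> VH"
    and f: "inj_on f (VH - {v})" "f ` (VH - {v}) \<subseteq> VG"
      "\<forall>x\<in>VH - {v}. \<forall>y\<in>VH - {v}. delete_vertex EH v x y \<longrightarrow> EG (f x) (f y)"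
    and w: "w \<in> VG - f ` (VH - {v})" "\<And>u. u \<in> VH \<Longrightarrow> EH v u \<Longrightarrow> EG (f u) w"
  shows "contains_subgraph VG EG VH EH"
  unfolding contains_subgraph_def
proof (intro exI conjI ballI impI)
  let ?g = "f(v := w)"
  have "VH = insert v (VH - {v})" using \<open>v \<in> VH\<close> by blast
  then show "inj_on ?g VH" using f(1) w(1) by (auto simp: inj_on_def)
  show "?g ` VH \<subseteq> VG" using f(2) w(1) by auto
  fix x y assume xy: "x \<in> VH" "y \<in> VH" "EH x y"
  have "x \<noteq> y" using H xy(3) by (auto simp: fin_graph_def)
  consider "x = v" | "y = v" | "x \<noteq> v" "y \<noteq> v" by blast
  then show "EG (?g x) (?g y)"
  proof cases
    case 1
    then have "EG (f y) w" using w(2) xy by blast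
    then show ?thesis using 1 \<open>x \<noteq> y\<close> G by (simp add: fin_graph_def)
  next
    case 2
    have "EH y x" using H xy(3) by (simp add: fin_graph_def)
    then show ?thesis using 2 \<open>x \<noteq> y\<close> w(2) xy(1) by simp
  next
    case 3
    then show ?thesis using f(3) xy by (simp add: delete_vertex_def)
  qed
qed

lemma extension_property_imp_contains_two_degenerate:
  assumes G: "fin_graph VG EG" and ext: "extension_property VG EG t"
    and H: "fin_graph VH EH" "two_degenerate VH EH" and "card VH \<le> t"
  shows "contains_subgraph VG EG VH EH"
  using H \<open>card VH \<le> t\<close>
proof (induction "card VH" arbitrary: VH EH)
  case 0
  then have "VH = {}" by (simp add: fin_graph_def)
  then show ?case by (simp add: contains_subgraph_def)
next
  case (Suc m)
  have finH: "finite VH" using Suc.prems(1) by (simp add: fin_graph_def)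
  obtain v where v: "v \<in> VH" and deg_v: "degree VH EH v \<le> 2"
    using two_degenerate_obtains_low_degree[OF Suc.prems(1,2)] Suc.hyps(2) by force
  have card_del: "card (VH - {v}) = m" using Suc.hyps(2) v finH by simp
  then have "contains_subgraph VG EG (VH - {v}) (delete_vertex EH v)"
    using Suc.hyps fin_graph_delete_vertex[OF Suc.prems(1)]
      two_degenerate_delete_vertex[OF Suc.prems(2)] Suc.prems(3) by simp
  then obtain f where f: "inj_on f (VH - {v})" "f ` (VH - {v}) \<subseteq> VG"
      "\<forall>x\<in>VH - {v}. \<forall>y\<in>VH - {v}. delete_vertex EH v x y \<longrightarrow> EG (f x) (f y)"
    unfolding contains_subgraph_def by blast
  let ?N = "{u \<in> VH. EH v u}"
  have "?N \<subseteq> VH - {v}" using Suc.prems(1) by (auto simp: fin_graph_def)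
  then have "f ` ?N \<subseteq> f ` (VH - {v})" by (rule image_mono)
  moreover have "card (f ` ?N) \<le> 2"
    using card_image_le[of ?N f] finH deg_v by (simp add: degree_def)
  moreover have "card (f ` (VH - {v})) < t"
    using card_image_le[of "VH - {v}" f] finH card_del Suc.hyps(2) Suc.prems(3) by simp
  ultimately obtain w where "w \<in> VG - f ` (VH - {v})" and "\<forall>a\<in>f ` ?N. EG a w"
    using extension_propertyD[OF ext f(2)] by blast
  then show ?case
    using contains_subgraph_insert_vertex[OF G Suc.prems(1) v f] by simp
qed

theorem lemma10:
  fixes VG :: "'a set" and EG :: "'a \<Rightarrow> 'a \<Rightarrow> bool"
    and VH :: "'b set" and EH :: "'b \<Rightarrow> 'b \<Rightarrow> bool"
    and t :: nat
  assumes "fin_graph VG EG" and "card VG \<ge> 1"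
    and "t \<ge> 1"
    and "2 * int (min_degree VG EG) - int (card VG) \<ge> int t - 2"
    and "fin_graph VH EH" and "two_degenerate VH EH" and "card VH = t"
  shows "contains_subgraph VG EG VH EH"
proof -
  have "VG \<noteq> {}" using assms(2) by auto
  then have "extension_property VG EG t"
    using min_degree_imp_extension_property assms(1,4) by blast
  then show ?thesis
    using extension_property_imp_contains_two_degenerate assms(1,5-7) by blast
qed

end
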